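(* Let $n\geq 2$ be an integer, let $c,\varepsilon\in[0,1]$, and let $G$ be a connected graph on $n$ vertices. Assume that $G$ contains no empty bipartite graph with sides of size at least $c\cdot n$, i.e. there are no two disjoint vertex sets $X,Y\subseteq V(G)$ with $|X|,|Y|\geq c\cdot n$ such that no edge of $G$ joins a vertex of $X$ to a vertex of $Y$. Assume moreover that every vertex $x$ of $G$ has closed degree $\overline{d(x)}\leq \varepsilon\cdot n$. Then for every vertex $x$ of $G$ there is an induced path on $k$ vertices in $G$ having $x$ as an endpoint, with $k\geq \frac{1}{2(\varepsilon+c)}$.
   Context: All graphs are finite and simple. The closed degree of a vertex $x$ is $\overline{d(x)}=d(x)+1=|N[x]|$, where $N[x]=\{x\}\cup\{y: xy\in E(G)\}$ is the closed neighborhood. An induced path on $k$ vertices ($P_k$) is a set of $k$ vertices $v_1,\dots,v_k$ such that $v_iv_j$ is an edge if and only if $|i-j|=1$; "starting in $x$" means $v_1=x$. *)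

theory Defs
  imports Complex_Main
begin

definition simple_graph :: "'a set \<Rightarrow> ('a \<Rightarrow> 'a \<Rightarrow> bool) \<Rightarrow> bool" where
  "simple_graph V E \<longleftrightarrow> finite V \<and> (\<forall>u v. E u v \<longrightarrow> u \<in> V \<and> v \<in> V)
     \<and> (\<forall>u v. E u v \<longrightarrow> E v u) \<and> (\<forall>u. \<not> E u u)"

definition connected_graph :: "'a set \<Rightarrow> ('a \<Rightarrow> 'a \<Rightarrow> bool) \<Rightarrow> bool" where
  "connected_graph V E \<longleftrightarrow> (\<forall>u\<in>V. \<forall>v\<in>V. (u, v) \<in> {(a, b). E a b}\<^sup>*)"

definition closed_nbhd :: "'a set \<Rightarrow> ('a \<Rightarrow> 'a \<Rightarrow> bool) \<Rightarrow> 'a \<Rightarrow> 'a set" where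
  "closed_nbhd V E x = insert x {y \<in> V. E x y}"

definition closed_degree :: "'a set \<Rightarrow> ('a \<Rightarrow> 'a \<Rightarrow> bool) \<Rightarrow> 'a \<Rightarrow> nat" where
  "closed_degree V E x = card (closed_nbhd V E x)"

definition induced_path_from :: "'a set \<Rightarrow> ('a \<Rightarrow> 'a \<Rightarrow> bool) \<Rightarrow> 'a \<Rightarrow> 'a list \<Rightarrow> bool" where
  "induced_path_from V E x vs \<longleftrightarrow> vs \<noteq> [] \<and> hd vs = x \<and> distinct vs \<and> set vs \<subseteq> V
     \<and> (\<forall>i<length vs. \<forall>j<length vs. E (vs ! i) (vs ! j) \<longleftrightarrow> (i = j + 1 \<or> j = i + 1))"

definition has_empty_bipartite :: "'a set \<Rightarrow> ('a \<Rightarrow> 'a \<Rightarrow> bool) \<Rightarrow> real \<Rightarrow> bool" where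
  "has_empty_bipartite V E s \<longleftrightarrow> (\<exists>X Y. X \<subseteq> V \<and> Y \<subseteq> V \<and> X \<inter> Y = {}
     \<and> real (card X) \<ge> s \<and> real (card Y) \<ge> s \<and> (\<forall>x\<in>X. \<forall>y\<in>Y. \<not> E x y))"

end

theory Submission imports Defs begin

text \<open>Grow the path greedily from x while keeping a reservoir C: a set of vertices,
  connected together with the current endpoint v, none of which is on or adjacent to the
  path except possibly to v. To extend, delete from C the (fewer than \<epsilon>n) neighbours of v;
  since G has no empty bipartite graph with sides cn, what remains, R, has a connected
  component K with |K| \<ge> |R| - 2cn. Connectedness yields a neighbour u of v adjacent to K; append u and take K as the new
  reservoir. Each step costs at most (\<epsilon> + 2c)n reservoir vertices, so starting from
  C = V - {x} the path reaches 1 + (n - 1)/((\<epsilon> + 2c)n) \<ge> 1/(2(\<epsilon> + c)) vertices.\<close>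

definition closed_under_adj :: "('a \<Rightarrow> 'a \<Rightarrow> bool) \<Rightarrow> 'a set \<Rightarrow> 'a set \<Rightarrow> bool" where
  "closed_under_adj E R T \<longleftrightarrow> T \<subseteq> R \<and> (\<forall>a\<in>T. \<forall>b\<in>R - T. \<not> E a b)"

definition connected_set :: "('a \<Rightarrow> 'a \<Rightarrow> bool) \<Rightarrow> 'a set \<Rightarrow> bool" where
  "connected_set E S \<longleftrightarrow> (\<forall>T. T \<subseteq> S \<longrightarrow> T \<noteq> {} \<longrightarrow> T \<noteq> S \<longrightarrow> (\<exists>a\<in>T. \<exists>b\<in>S - T. E a b))"

definition path_reservoir :: "'a set \<Rightarrow> ('a \<Rightarrow> 'a \<Rightarrow> bool) \<Rightarrow> 'a list \<Rightarrow> 'a set \<Rightarrow> bool" where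
  "path_reservoir V E vs C \<longleftrightarrow> C \<subseteq> V \<and> last vs \<notin> C
     \<and> (\<forall>y\<in>C. \<forall>w\<in>set (butlast vs). \<not> E w y \<and> y \<noteq> w)
     \<and> connected_set E (insert (last vs) C)"

lemma no_empty_bipartite_imp_pos:
  assumes "\<not> has_empty_bipartite V E s"
  shows "s > 0"
proof (rule ccontr)
  assume "\<not> s > 0"
  then have "has_empty_bipartite V E s"
    unfolding has_empty_bipartite_def by (intro exI[of _ "{}"]) auto
  with assms show False by simp
qed

lemma connected_set_singleton: "connected_set E {u}"
  unfolding connected_set_def by auto

lemma connected_set_insert:
  assumes sym: "\<And>a b. E a b \<Longrightarrow> E b a" and K: "connected_set E K"
    and "a \<in> K" "E a u"
  shows "connected_set E (insert u K)"
  unfolding connected_set_def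
proof (intro allI impI)
  fix T assume T: "T \<subseteq> insert u K" "T \<noteq> {}" "T \<noteq> insert u K"
  consider "T \<inter> K = {}" | "T \<inter> K = K" | "T \<inter> K \<noteq> {}" "T \<inter> K \<noteq> K" by blast
  then show "\<exists>a\<in>T. \<exists>b\<in>insert u K - T. E a b"
  proof cases
    case 1
    then have "T = {u}" "a \<notin> T" using T \<open>a \<in> K\<close> by auto
    then show ?thesis using \<open>a \<in> K\<close> \<open>E a u\<close> sym by auto
  next
    case 2
    then have "u \<notin> T" "a \<in> T" using T \<open>a \<in> K\<close> by auto
    then show ?thesis using \<open>E a u\<close> by auto
  next
    case 3
    then obtain a' b' where "a' \<in> T \<inter> K" "b' \<in> K - T \<inter> K" "E a' b'"
      using K unfolding connected_set_def by (metis inf_le2)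
    then show ?thesis by auto
  qed
qed

lemma connected_graph_imp_connected_set:
  assumes "simple_graph V E" "connected_graph V E"
  shows "connected_set E V"
  unfolding connected_set_def
proof (intro allI impI)
  fix T assume T: "T \<subseteq> V" "T \<noteq> {}" "T \<noteq> V"
  then obtain a b where ab: "a \<in> T" "b \<in> V - T" by auto
  show "\<exists>a\<in>T. \<exists>b\<in>V - T. E a b"
  proof (rule ccontr)
    assume no_edge: "\<not> ?thesis"
    have "(a, b) \<in> {(p, q). E p q}\<^sup>*"
      using assms(2) ab T(1) unfolding connected_graph_def by blast
    then have "b \<in> T"
    proof (induction rule: rtrancl_induct)
      case (step y z)
      have "z \<in> V" using step.hyps(2) assms(1) unfolding simple_graph_def by blast
      then show ?case using step no_edge by blast
    qed (use ab in blast)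
    then show False using ab by simp
  qed
qed

lemma exists_connected_closed_subset:
  assumes "finite R" "closed_under_adj E R T" "T \<noteq> {}"
  shows "\<exists>K. closed_under_adj E R K \<and> K \<subseteq> T \<and> K \<noteq> {} \<and> connected_set E K"
  using assms(2,3)
proof (induction "card T" arbitrary: T rule: less_induct)
  case less
  show ?case
  proof (cases "connected_set E T")
    case False
    then obtain T' where T': "T' \<subseteq> T" "T' \<noteq> {}" "T' \<noteq> T" "\<forall>a\<in>T'. \<forall>b\<in>T - T'. \<not> E a b"
      unfolding connected_set_def by blast
    have "closed_under_adj E R T'" using less.prems(1) T' unfolding closed_under_adj_def by blast
    moreover have "card T' < card T"
      using T' less.prems(1) assms(1) unfolding closed_under_adj_def
      by (meson psubsetI psubset_card_mono finite_subset)
    ultimately show ?thesis using less.hyps T' by blast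
  qed (use less.prems in blast)
qed

text \<open>The key consequence of excluding empty bipartite graphs with sides s: take a
  minimal closed X with |X| \<ge> s; then |R - X| < s, and any connected closed K \<subseteq> X
  has |X - K| < s by minimality.\<close>

lemma large_connected_closed_subset:
  assumes sg: "simple_graph V E" and no_bip: "\<not> has_empty_bipartite V E s"
    and "R \<subseteq> V" "R \<noteq> {}"
  shows "\<exists>K. closed_under_adj E R K \<and> K \<noteq> {} \<and> connected_set E K
           \<and> real (card R) \<le> real (card K) + 2 * s"
proof -
  have sym: "\<And>a b. E a b \<Longrightarrow> E b a" and fR: "finite R"
    using sg \<open>R \<subseteq> V\<close> unfolding simple_graph_def by (auto intro: finite_subset)
  have clR: "closed_under_adj E R R" unfolding closed_under_adj_def by auto
  have small_if_separated: "real (card X) < s \<or> real (card Y) < s"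
    if "X \<subseteq> V" "Y \<subseteq> V" "X \<inter> Y = {}" "\<forall>x\<in>X. \<forall>y\<in>Y. \<not> E x y" for X Y
    using no_bip that unfolding has_empty_bipartite_def by (meson not_le)
  show ?thesis
  proof (cases "real (card R) < s")
    case True
    then show ?thesis
      using exists_connected_closed_subset[OF fR clR \<open>R \<noteq> {}\<close>] by force
  next
    case False
    let ?P = "\<lambda>X. closed_under_adj E R X \<and> real (card X) \<ge> s"
    have "\<exists>X. ?P X \<and> (\<forall>Y. ?P Y \<longrightarrow> card X \<le> card Y)"
      by (rule ex_has_least_nat[of _ R]) (use False clR in auto)
    then obtain X where X: "?P X" and X_min: "\<And>Y. ?P Y \<Longrightarrow> card X \<le> card Y"
      by blast
    have XR: "X \<subseteq> R" and fX: "finite X"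
      using X fR unfolding closed_under_adj_def by (auto intro: finite_subset)
    have "X \<noteq> {}" using no_empty_bipartite_imp_pos[OF no_bip] X by auto
    then obtain K where K: "closed_under_adj E R K" "K \<subseteq> X" "K \<noteq> {}" "connected_set E K"
      using exists_connected_closed_subset[OF fR] X by blast
    have "closed_under_adj E R (X - K)" using X K(1) XR sym unfolding closed_under_adj_def by blast
    moreover have "card (X - K) < card X"
    proof -
      have "0 < card K" using K(2,3) fX by (meson card_gt_0_iff finite_subset)
      then show ?thesis using K(2) fX card_mono[OF fX K(2)] by (simp add: card_Diff_subset finite_subset)
    qed
    ultimately have "real (card (X - K)) < s" using X_min by force
    moreover have "real (card (R - X)) < s"
      using small_if_separated[of X "R - X"] X XR \<open>R \<subseteq> V\<close> unfolding closed_under_adj_def by auto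
    moreover have "card R = card (X - K) + card K + card (R - X)"
      using K(2) XR fR fX by (simp add: card_Diff_subset card_mono finite_subset)
    ultimately show ?thesis using K by (intro exI[of _ K]) auto
  qed
qed

lemma set_insert_last_butlast: "xs \<noteq> [] \<Longrightarrow> set xs = insert (last xs) (set (butlast xs))"
  by (metis append_butlast_last_id set_append Un_insert_right empty_set list.set(2) sup_bot.right_neutral)

lemma induced_path_snoc:
  assumes sg: "simple_graph V E" and P: "induced_path_from V E x vs"
    and "u \<in> V" and adj: "E (last vs) u" and off_path: "\<forall>w\<in>set (butlast vs). \<not> E w u \<and> u \<noteq> w"
  shows "induced_path_from V E x (vs @ [u])"
proof -
  have sym: "\<And>a b. E a b \<Longrightarrow> E b a" and irr: "\<And>a. \<not> E a a"
    using sg unfolding simple_graph_def by auto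
  have ne: "vs \<noteq> []"
    and ind: "\<forall>i<length vs. \<forall>j<length vs. E (vs ! i) (vs ! j) \<longleftrightarrow> (i = j + 1 \<or> j = i + 1)"
    using P unfolding induced_path_from_def by auto
  let ?k = "length vs"
  have sv: "set vs = insert (last vs) (set (butlast vs))"
    using ne by (rule set_insert_last_butlast)
  have "u \<notin> set vs" using sv off_path adj irr by auto
  have adj_u: "E u (vs ! j) \<longleftrightarrow> j + 1 = ?k" if "j < ?k" for j
  proof (cases "j + 1 = ?k")
    case True
    then have "vs ! j = last vs" using ne by (metis add_diff_cancel_right' last_conv_nth)
    then show ?thesis using True adj sym by auto
  next
    case False
    then have "vs ! j \<in> set (butlast vs)" using that by (simp add: nth_butlast[symmetric])
    then show ?thesis using False off_path sym by blast
  qed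
  have "E ((vs @ [u]) ! i) ((vs @ [u]) ! j) \<longleftrightarrow> (i = j + 1 \<or> j = i + 1)"
    if "i < Suc ?k" "j < Suc ?k" for i j
    using that ind adj_u[of i] adj_u[of j] sym irr
    by (cases "i < ?k"; cases "j < ?k") (auto simp: nth_append less_Suc_eq)
  then show ?thesis
    using P \<open>u \<in> V\<close> \<open>u \<notin> set vs\<close> unfolding induced_path_from_def by auto
qed

lemma card_neighbours_less_closed_degree:
  assumes "simple_graph V E" "v \<notin> C"
  shows "card {y\<in>C. E v y} < closed_degree V E v"
proof -
  have "finite {y\<in>V. E v y}" and "\<not> E v v" and "{y\<in>C. E v y} \<subseteq> {y\<in>V. E v y}"
    using assms unfolding simple_graph_def by auto
  then show ?thesis
    unfolding closed_degree_def closed_nbhd_def by (simp add: card_mono le_imp_less_Suc)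
qed

lemma neighbour_with_large_reservoir:
  assumes sg: "simple_graph V E" and no_bip: "\<not> has_empty_bipartite V E s"
    and "C \<subseteq> V" "v \<notin> C" "C \<noteq> {}" and conn: "connected_set E (insert v C)"
  defines "R \<equiv> C - {y\<in>C. E v y}"
  shows "\<exists>u K. u \<in> C \<and> E v u \<and> closed_under_adj E R K \<and> u \<notin> K
           \<and> connected_set E (insert u K) \<and> real (card R) \<le> real (card K) + 2 * s"
proof (cases "R = {}")
  case True
  have "{v} \<subseteq> insert v C" "{v} \<noteq> insert v C" using \<open>C \<noteq> {}\<close> \<open>v \<notin> C\<close> by auto
  then obtain u where "u \<in> C" "E v u"
    using conn \<open>v \<notin> C\<close> unfolding connected_set_def by blast
  moreover have "closed_under_adj E R {}" unfolding closed_under_adj_def by simp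
  moreover have "real (card R) \<le> real (card {}) + 2 * s"
    unfolding True using no_empty_bipartite_imp_pos[OF no_bip] by simp
  ultimately show ?thesis
    using connected_set_singleton[of E u] by (intro exI[of _ u] exI[of _ "{}"]) simp
next
  case False
  have sym: "\<And>a b. E a b \<Longrightarrow> E b a" using sg unfolding simple_graph_def by auto
  obtain K where K: "closed_under_adj E R K" "K \<noteq> {}" "connected_set E K"
    "real (card R) \<le> real (card K) + 2 * s"
    using large_connected_closed_subset[OF sg no_bip _ False] \<open>C \<subseteq> V\<close> unfolding R_def by blast
  have KR: "K \<subseteq> R" using K(1) unfolding closed_under_adj_def by auto
  have "K \<subseteq> insert v C" "K \<noteq> insert v C" using KR \<open>v \<notin> C\<close> unfolding R_def by auto
  then obtain a u where au: "a \<in> K" "u \<in> insert v C - K" "E a u"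
    using conn K(2) unfolding connected_set_def by blast
  \<comment> \<open>K is closed in R and not adjacent to v, so the edge leaving K ends in a neighbour of v\<close>
  have "u \<noteq> v" using au KR sym unfolding R_def by auto
  moreover have "u \<notin> R - K" using au K(1) unfolding closed_under_adj_def by blast
  ultimately have "u \<in> C" "E v u" using au unfolding R_def by auto
  then show ?thesis
    using K(1,4) au connected_set_insert[OF sym K(3) au(1,3)] by (intro exI[of _ u] exI[of _ K]) auto
qed

lemma path_reservoir_step:
  assumes sg: "simple_graph V E" and no_bip: "\<not> has_empty_bipartite V E s"
    and P: "induced_path_from V E x vs" and I: "path_reservoir V E vs C" and "C \<noteq> {}"
    and deg: "real (closed_degree V E (last vs)) \<le> d"
  shows "\<exists>u C'. induced_path_from V E x (vs @ [u]) \<and> path_reservoir V E (vs @ [u]) C'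
           \<and> card C' < card C \<and> real (card C) \<le> real (card C') + d + 2 * s"
proof -
  let ?v = "last vs"
  let ?N = "{y\<in>C. E ?v y}"
  let ?R = "C - ?N"
  have CV: "C \<subseteq> V" and vC: "?v \<notin> C" and off_path: "\<forall>y\<in>C. \<forall>w\<in>set (butlast vs). \<not> E w y \<and> y \<noteq> w"
    and conn: "connected_set E (insert ?v C)" using I unfolding path_reservoir_def by auto
  have fC: "finite C" using CV sg unfolding simple_graph_def by (auto intro: finite_subset)
  have ne: "vs \<noteq> []" using P unfolding induced_path_from_def by auto
  obtain u K where u: "u \<in> C" "E ?v u" and K: "closed_under_adj E ?R K" "u \<notin> K"
    "connected_set E (insert u K)" "real (card ?R) \<le> real (card K) + 2 * s"
    using neighbour_with_large_reservoir[OF sg no_bip CV vC \<open>C \<noteq> {}\<close> conn] by blast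
  have KC: "K \<subseteq> C - {u}" and K_off_v: "\<forall>y\<in>K. \<not> E ?v y"
    using K(1,2) unfolding closed_under_adj_def by auto
  have "induced_path_from V E x (vs @ [u])"
    using induced_path_snoc[OF sg P _ u(2)] u(1) CV off_path by blast
  moreover have "path_reservoir V E (vs @ [u]) K"
  proof -
    have "set vs = insert ?v (set (butlast vs))"
      using ne by (rule set_insert_last_butlast)
    then have "\<forall>y\<in>K. \<forall>w\<in>set vs. \<not> E w y \<and> y \<noteq> w"
      using KC K_off_v off_path vC by auto
    then show ?thesis
      using KC CV K(2,3) unfolding path_reservoir_def by auto
  qed
  moreover have "card K < card C"
    using KC u(1) fC by (meson card_Diff1_less card_mono finite_Diff le_less_trans)
  moreover have "real (card C) \<le> real (card K) + d + 2 * s"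
  proof -
    have "card C = card ?N + card ?R" using fC by (simp add: card_Diff_subset card_mono)
    moreover have "card ?N < closed_degree V E ?v"
      using card_neighbours_less_closed_degree[OF sg vC] .
    ultimately show ?thesis using K(4) deg by linarith
  qed
  ultimately show ?thesis by blast
qed

lemma long_induced_path_from_reservoir:
  assumes sg: "simple_graph V E" and no_bip: "\<not> has_empty_bipartite V E s"
    and deg: "\<forall>y\<in>V. real (closed_degree V E y) \<le> d" and "d + 2 * s > 0"
  shows "induced_path_from V E x vs \<Longrightarrow> path_reservoir V E vs C \<Longrightarrow>
    \<exists>ws. induced_path_from V E x ws \<and> real (length vs) + real (card C) / (d + 2 * s) \<le> real (length ws)"
proof (induction "card C" arbitrary: vs C rule: less_induct)
  case less
  show ?case
  proof (cases "C = {}")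
    case False
    have "last vs \<in> V" using less.prems(1) unfolding induced_path_from_def by auto
    then obtain u C' where uC': "induced_path_from V E x (vs @ [u])" "path_reservoir V E (vs @ [u]) C'"
        "card C' < card C" "real (card C) \<le> real (card C') + d + 2 * s"
      using path_reservoir_step[OF sg no_bip less.prems False] deg by blast
    obtain ws where ws: "induced_path_from V E x ws"
      "real (length vs) + 1 + real (card C') / (d + 2 * s) \<le> real (length ws)"
      using less.hyps[OF uC'(3,1,2)] by auto
    have "real (card C) / (d + 2 * s) \<le> (real (card C') + (d + 2 * s)) / (d + 2 * s)"
      using uC'(4) \<open>d + 2 * s > 0\<close> by (intro divide_right_mono) auto
    also have "\<dots> = 1 + real (card C') / (d + 2 * s)"
      using \<open>d + 2 * s > 0\<close> by (simp add: add_divide_distrib)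
    finally show ?thesis using ws by (intro exI[of _ ws]) auto
  qed (use less.prems in auto)
qed

lemma reciprocal_bound:
  fixes n \<epsilon> c :: real
  assumes "n \<ge> 1" "\<epsilon> * n \<ge> 1" "c \<ge> 0"
  shows "1 / (2 * (\<epsilon> + c)) \<le> 1 + (n - 1) / (\<epsilon> * n + 2 * (c * n))"
proof -
  let ?L = "\<epsilon> * n + 2 * (c * n)"
  have "c * n \<ge> 0" using assms by simp
  then have L: "1 \<le> ?L" "?L \<le> 2 * (\<epsilon> * n + c * n)"
    using assms by (linarith, simp add: algebra_simps)
  have "1 / (2 * (\<epsilon> + c)) = n / (n * (2 * (\<epsilon> + c)))"
    using assms(1) by simp
  also have "\<dots> = n / (2 * (\<epsilon> * n + c * n))" by (simp add: algebra_simps)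
  also have "\<dots> \<le> n / ?L"
    using L assms(1) by (intro divide_left_mono) auto
  also have "\<dots> = 1 / ?L + (n - 1) / ?L" by (simp add: diff_divide_distrib)
  also have "\<dots> \<le> 1 + (n - 1) / ?L" using \<open>?L \<ge> 1\<close> by simp
  finally show ?thesis .
qed

theorem theorem3:
  fixes V :: "'a set" and E :: "'a \<Rightarrow> 'a \<Rightarrow> bool" and n :: nat and c \<epsilon> :: real
  assumes "n \<ge> 2"
    and "0 \<le> c" "c \<le> 1" "0 \<le> \<epsilon>" "\<epsilon> \<le> 1"
    and "simple_graph V E" "card V = n" "connected_graph V E"
    and "\<not> has_empty_bipartite V E (c * real n)"
    and "\<forall>x\<in>V. real (closed_degree V E x) \<le> \<epsilon> * real n"
  shows "\<forall>x\<in>V. \<exists>vs. induced_path_from V E x vs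
           \<and> real (length vs) \<ge> 1 / (2 * (\<epsilon> + c))"
proof
  fix x assume "x \<in> V"
  have fV: "finite V" using assms(6) unfolding simple_graph_def by simp
  have "1 \<le> closed_degree V E x"
    using fV unfolding closed_degree_def closed_nbhd_def by (simp add: Suc_le_eq card_gt_0_iff)
  then have en: "\<epsilon> * real n \<ge> 1" using assms(10) \<open>x \<in> V\<close> by fastforce
  have "induced_path_from V E x [x]"
    using \<open>x \<in> V\<close> assms(6) unfolding induced_path_from_def simple_graph_def by auto
  moreover have "path_reservoir V E [x] (V - {x})"
    using connected_graph_imp_connected_set[OF assms(6,8)] \<open>x \<in> V\<close>
    unfolding path_reservoir_def by (simp add: insert_absorb)
  moreover have "\<epsilon> * real n + 2 * (c * real n) > 0"
    using en mult_nonneg_nonneg[OF assms(2), of "real n"] by linarith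
  ultimately obtain ws where "induced_path_from V E x ws"
    "1 + real (card (V - {x})) / (\<epsilon> * real n + 2 * (c * real n)) \<le> real (length ws)"
    using long_induced_path_from_reservoir[OF assms(6,9,10)] by fastforce
  moreover have "real (card (V - {x})) = real n - 1"
    using \<open>x \<in> V\<close> fV assms(1,7) by simp
  moreover have "1 / (2 * (\<epsilon> + c)) \<le> 1 + (real n - 1) / (\<epsilon> * real n + 2 * (c * real n))"
    using reciprocal_bound[OF _ en assms(2)] assms(1) by simp
  ultimately show "\<exists>vs. induced_path_from V E x vs \<and> real (length vs) \<ge> 1 / (2 * (\<epsilon> + c))"
    by (intro exI[of _ ws]) auto
qed

end
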